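(* Let $W$ be an ordered vector space which is monotone complete and which carries a faithful normal positive linear functional. Then every vector subspace $V$ of $W$ which is monotone sequentially closed in $W$ is monotone closed in $W$.
   Context: An ordered vector space $W$ is called monotone complete if every non-empty upper bounded upward directed subset of $W$ has a supremum in $W$ (in particular every upper bounded increasing sequence in $W$ has a supremum in $W$). For a vector subspace $V$ of such $W$: $V$ is monotone closed in $W$ if $V$ contains the supremum in $W$ of every non-empty upward directed subset of $V$ that is upper bounded in $W$; $V$ is monotone sequentially closed in $W$ if $V$ contains the supremum in $W$ of every increasing sequence in $V$ that is upper bounded in $W$. A positive linear functional $\psi$ on $W$ is faithful if $\psi(a)>0$ for every positive $a\neq 0$ in $W$, and normal if $\psi(\sup J)=\sup_{j\in J}\psi(j)$ for every non-empty upper bounded upward directed subset $J$ of $W$. *)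

theory Defs
  imports "HOL-Analysis.Analysis"
begin

definition up_directed :: "'a::order set \<Rightarrow> bool" where
  "up_directed J \<longleftrightarrow> (\<forall>a\<in>J. \<forall>b\<in>J. \<exists>c\<in>J. a \<le> c \<and> b \<le> c)"

definition is_sup :: "'a::order set \<Rightarrow> 'a \<Rightarrow> bool" where
  "is_sup J s \<longleftrightarrow> (\<forall>j\<in>J. j \<le> s) \<and> (\<forall>u. (\<forall>j\<in>J. j \<le> u) \<longrightarrow> s \<le> u)"

definition monotone_complete :: "'a::order itself \<Rightarrow> bool" where
  "monotone_complete _ \<longleftrightarrow>
     (\<forall>J::'a set. J \<noteq> {} \<and> up_directed J \<and> bdd_above J \<longrightarrow> (\<exists>s. is_sup J s))"

definition monotone_closed :: "'a::order set \<Rightarrow> bool" where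
  "monotone_closed V \<longleftrightarrow>
     (\<forall>J s. J \<subseteq> V \<and> J \<noteq> {} \<and> up_directed J \<and> is_sup J s \<longrightarrow> s \<in> V)"

definition monotone_seq_closed :: "'a::order set \<Rightarrow> bool" where
  "monotone_seq_closed V \<longleftrightarrow>
     (\<forall>(f::nat \<Rightarrow> 'a) s. (\<forall>n. f n \<in> V) \<and> incseq f \<and> is_sup (range f) s \<longrightarrow> s \<in> V)"

definition positive_functional :: "('a::ordered_real_vector \<Rightarrow> real) \<Rightarrow> bool" where
  "positive_functional \<psi> \<longleftrightarrow> linear \<psi> \<and> (\<forall>a. 0 \<le> a \<longrightarrow> 0 \<le> \<psi> a)"

definition faithful :: "('a::ordered_real_vector \<Rightarrow> real) \<Rightarrow> bool" where
  "faithful \<psi> \<longleftrightarrow> (\<forall>a. 0 \<le> a \<and> a \<noteq> 0 \<longrightarrow> \<psi> a > 0)"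

definition normal :: "('a::ordered_real_vector \<Rightarrow> real) \<Rightarrow> bool" where
  "normal \<psi> \<longleftrightarrow>
     (\<forall>J s. J \<noteq> {} \<and> up_directed J \<and> is_sup J s \<longrightarrow> \<psi> s = (SUP j\<in>J. \<psi> j))"

end

theory Submission
  imports Defs
begin

text \<open>Let \<open>s\<close> be the supremum of a directed set \<open>J \<subseteq> V\<close>. Since \<open>\<psi>\<close> is real-valued,
  its supremum over \<open>J\<close> is already its supremum along some increasing sequence in \<open>J\<close>.
  The supremum \<open>t\<close> of this sequence lies in \<open>V\<close> and satisfies \<open>t \<le> s\<close>, while normality
  gives \<open>\<psi> s \<le> \<psi> t\<close>. Faithfulness then forces \<open>t = s\<close>.\<close>

lemma incseq_up_directed:
  fixes k :: "nat \<Rightarrow> 'a::order"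
  assumes "incseq k"
  shows "up_directed (range k)"
  unfolding up_directed_def
proof (intro ballI)
  fix a b assume "a \<in> range k" "b \<in> range k"
  then obtain m n where "a = k m" "b = k n" by blast
  then show "\<exists>c\<in>range k. a \<le> c \<and> b \<le> c"
    using incseqD[OF assms, of m "max m n"] incseqD[OF assms, of n "max m n"] by auto
qed

lemma up_directed_dominating_incseq:
  fixes j :: "nat \<Rightarrow> 'a::order"
  assumes "up_directed J" and "range j \<subseteq> J"
  obtains k where "incseq k" and "range k \<subseteq> J" and "\<And>n. j n \<le> k n"
proof -
  obtain u where u: "\<And>a b. a \<in> J \<Longrightarrow> b \<in> J \<Longrightarrow> u a b \<in> J \<and> a \<le> u a b \<and> b \<le> u a b"
    using assms(1) unfolding up_directed_def by metis
  define k where "k = rec_nat (j 0) (\<lambda>n x. u x (j (Suc n)))"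
  have k_Suc: "k (Suc n) = u (k n) (j (Suc n))" for n
    by (simp add: k_def)
  have kJ: "k n \<in> J \<and> j n \<le> k n" for n
  proof (induction n)
    case 0
    then show ?case using assms(2) by (simp add: k_def range_subsetD)
  next
    case (Suc n)
    then show ?case using u[of "k n" "j (Suc n)"] assms(2) by (auto simp: k_Suc)
  qed
  have "incseq k"
  proof (rule incseq_SucI)
    fix n show "k n \<le> k (Suc n)"
      using u[of "k n" "j (Suc n)"] kJ assms(2) by (auto simp: k_Suc)
  qed
  then show ?thesis using kJ that by blast
qed

lemma up_directed_incseq_SUP_eq:
  fixes f :: "'a::order \<Rightarrow> real"
  assumes "up_directed J" and "J \<noteq> {}" and "bdd_above (f ` J)" and "mono_on J f"
  obtains k where "incseq k" and "range k \<subseteq> J" and "(SUP n. f (k n)) = (SUP x\<in>J. f x)"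
proof -
  have "\<exists>x\<in>J. (SUP x\<in>J. f x) - 1 / Suc n < f x" for n :: nat
    using assms(2,3) by (simp add: less_cSUP_iff[symmetric])
  then obtain j where j: "range j \<subseteq> J" "\<And>n. (SUP x\<in>J. f x) - 1 / Suc n < f (j n)"
    by (metis image_subset_iff rangeI)
  obtain k where k: "incseq k" "range k \<subseteq> J" "\<And>n. j n \<le> k n"
    using up_directed_dominating_incseq[OF assms(1) j(1)] by blast
  have fk_le: "f (k n) \<le> (SUP x\<in>J. f x)" for n
    using k(2) assms(3) by (auto intro: cSUP_upper)
  have "(SUP n. f (k n)) = (SUP x\<in>J. f x)"
  proof (rule antisym)
    show "(SUP n. f (k n)) \<le> (SUP x\<in>J. f x)"
      using fk_le by (auto intro: cSUP_least)
  next
    show "(SUP x\<in>J. f x) \<le> (SUP n. f (k n))"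
    proof (rule field_le_epsilon)
      fix e :: real assume "0 < e"
      then obtain n where n: "1 / Suc n < e" by (rule nat_approx_posE)
      have "f (j n) \<le> f (k n)"
        using mono_onD[OF assms(4)] j(1) k(2,3) by blast
      also have "\<dots> \<le> (SUP n. f (k n))"
        using fk_le by (intro cSUP_upper) (auto intro!: bdd_aboveI2)
      finally show "(SUP x\<in>J. f x) \<le> (SUP n. f (k n)) + e"
        using j(2)[of n] n by linarith
    qed
  qed
  then show ?thesis using k that by blast
qed

lemma positive_functional_mono:
  assumes "positive_functional \<psi>"
  shows "mono \<psi>"
proof
  fix a b :: 'a assume "a \<le> b"
  then have "0 \<le> \<psi> (b - a)"
    using assms unfolding positive_functional_def by simp
  then show "\<psi> a \<le> \<psi> b"
    using assms linear_diff unfolding positive_functional_def by fastforce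
qed

lemma faithful_eqI:
  assumes "positive_functional \<psi>" and "faithful \<psi>" and "a \<le> b" and "\<psi> b \<le> \<psi> a"
  shows "a = b"
proof (rule ccontr)
  assume "a \<noteq> b"
  with assms(2,3) have "0 < \<psi> (b - a)"
    unfolding faithful_def by simp
  then show False
    using assms(1,4) linear_diff unfolding positive_functional_def by fastforce
qed

theorem corollary1:
  fixes \<psi> :: "'a::ordered_real_vector \<Rightarrow> real"
    and V :: "'a set"
  assumes "monotone_complete TYPE('a)"
    and "positive_functional \<psi>" and "faithful \<psi>" and "normal \<psi>"
    and "subspace V"
    and "monotone_seq_closed V"
  shows "monotone_closed V"
  unfolding monotone_closed_def
proof (intro allI impI)
  fix J s assume J: "J \<subseteq> V \<and> J \<noteq> {} \<and> up_directed J \<and> is_sup J s"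
  then have s_upper: "\<And>j. j \<in> J \<Longrightarrow> j \<le> s"
    unfolding is_sup_def by auto
  have mono: "mono \<psi>" using positive_functional_mono[OF assms(2)] .
  have "bdd_above (\<psi> ` J)"
    using s_upper monoD[OF mono] by (meson bdd_aboveI2)
  then obtain k where k: "incseq k" "range k \<subseteq> J" "(SUP n. \<psi> (k n)) = (SUP j\<in>J. \<psi> j)"
    using up_directed_incseq_SUP_eq[of J \<psi>] J mono by (auto intro: monotone_on_subset)
  have "bdd_above (range k)"
    using k(2) s_upper by (meson bdd_aboveI2 range_subsetD)
  then obtain t where t: "is_sup (range k) t"
    using assms(1) incseq_up_directed[OF k(1)] unfolding monotone_complete_def by blast
  have "t \<in> V"
    using assms(6) k J t unfolding monotone_seq_closed_def by blast
  have "t \<le> s"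
    using t k(2) s_upper unfolding is_sup_def by blast
  have "\<psi> s = (SUP n. \<psi> (k n))"
    using assms(4) J k(3) unfolding normal_def by simp
  also have "\<dots> \<le> \<psi> t"
    using t monoD[OF mono] unfolding is_sup_def by (auto intro: cSUP_least)
  finally have "t = s"
    using faithful_eqI[OF assms(2,3) \<open>t \<le> s\<close>] by simp
  then show "s \<in> V" using \<open>t \<in> V\<close> by simp
qed

end
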